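(* Let $M,M'\in\mathrm{Mat}(2,\mathbb{Z})$ have the same trace and the same determinant, and suppose $\mathrm{mgcd}(M')=\mathrm{mgcd}(M)=1$. Then the toral endomorphisms defined by $M$ and $M'$ have the same local statistics on all lattices $L_n$, $n\in\mathbb{N}$.
   Context: For $M=\begin{pmatrix}a&b\\c&d\end{pmatrix}$, $\mathrm{mgcd}(M)=\gcd(b,c,d-a)\ge0$. $L_n=\{(\frac{k}{n},\frac{\ell}{n}):0\le k,\ell<n\}\subset\mathbb{T}^2=\mathbb{R}^2/\mathbb{Z}^2$, with integer matrices acting by multiplication mod $1$. Two integer matrices have the same local statistics on $L_n$ if the directed pseudo-graphs on $L_n$ they induce (vertices the points of $L_n$, a directed edge from $x$ to $Mx$) are isomorphic as graphs. *)

theory Defs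
  imports "HOL-Analysis.Analysis"
begin

definition mgcd :: "int^2^2 \<Rightarrow> int" where
  "mgcd M = gcd (gcd (M$1$2) (M$2$1)) (M$2$2 - M$1$1)"

text \<open>The lattice L_n: the point (k/n, l/n) of the torus is encoded by the integer pair (k,l).\<close>
definition lattice :: "nat \<Rightarrow> (int \<times> int) set" where
  "lattice n = {0..<int n} \<times> {0..<int n}"

text \<open>Action of M on L_n (multiplication mod 1, i.e. mod n on numerators).\<close>
definition lat_act :: "int^2^2 \<Rightarrow> nat \<Rightarrow> int \<times> int \<Rightarrow> int \<times> int" where
  "lat_act M n p = ((M$1$1 * fst p + M$1$2 * snd p) mod int n,
                    (M$2$1 * fst p + M$2$2 * snd p) mod int n)"

definition lat_edge :: "int^2^2 \<Rightarrow> nat \<Rightarrow> int \<times> int \<Rightarrow> int \<times> int \<Rightarrow> bool" where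
  "lat_edge M n x y \<longleftrightarrow> x \<in> lattice n \<and> y \<in> lattice n \<and> y = lat_act M n x"

definition same_local_stats :: "int^2^2 \<Rightarrow> int^2^2 \<Rightarrow> nat \<Rightarrow> bool" where
  "same_local_stats M M' n \<longleftrightarrow>
     (\<exists>f. bij_betw f (lattice n) (lattice n) \<and>
          (\<forall>x\<in>lattice n. \<forall>y\<in>lattice n. lat_edge M n x y \<longleftrightarrow> lat_edge M' n (f x) (f y)))"

end

theory Submission
  imports Defs "HOL-Number_Theory.Cong"
begin

text \<open>
  Write \<open>C(t, d)\<close> for the companion matrix of \<open>X\<^sup>2 - t X + d\<close>. If \<open>v\<close> is any vector and
  \<open>P = (v | M v)\<close>, Cayley--Hamilton gives \<open>M P = P C(tr M, det M)\<close>, and \<open>det P = Q(v)\<close> for the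
  binary quadratic form \<open>Q(x, y) = c x\<^sup>2 + (d - a) x y - b y\<^sup>2\<close>, whose content is \<open>mgcd M\<close>.
  A primitive form takes values coprime to any given \<open>n\<close>, so \<open>P\<close> can be chosen invertible
  modulo \<open>n\<close>. Thus \<open>M\<close> and \<open>M'\<close> are both conjugate modulo \<open>n\<close> to the same companion matrix,
  and the conjugating matrix induces an isomorphism of the graphs on \<open>L\<^sub>n\<close>.
\<close>

lemma mat_mult_component: "(mat a ** B) $ i $ j = a * B $ i $ j"
  by (simp add: matrix_matrix_mult_def mat_def if_distrib[where f = "\<lambda>x. x * c" for c]
      sum.delta cong del: if_weak_cong)

lemma mult_mat_component: "(B ** mat a) $ i $ j = B $ i $ j * (a :: 'a::semiring_1)"
  by (simp add: matrix_matrix_mult_def mat_def if_distrib sum.delta' cong del: if_weak_cong)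

lemma mat_mult_mat: "mat a ** mat b = (mat (a * b) :: 'a::semiring_1^'n^'n)"
  by (simp add: vec_eq_iff mat_mult_component) (simp add: mat_def)

lemma mat_mult_commute: "mat a ** A = A ** (mat a :: 'a::comm_semiring_1^'n^'n)"
  by (simp add: vec_eq_iff mat_mult_component mult_mat_component mult.commute)

lemma matrix_mul_inner_mat:
  fixes A B C D :: "'a::comm_semiring_1^'n^'n"
  assumes "B ** C = mat s"
  shows "A ** B ** (C ** D) = mat s ** (A ** D)"
  by (metis assms matrix_mul_assoc mat_mult_commute)

lemma linear_combination_mod:
  "(a * (x mod n) + b * (y mod n)) mod n = (a * x + b * y) mod (n::int)"
  by (metis mod_add_eq mod_mult_right_eq)

lemma lat_act_mult: "lat_act (A ** B) n p = lat_act A n (lat_act B n p)"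
proof -
  have "lat_act A n (lat_act B n p) =
    ((A$1$1 * (B$1$1 * fst p + B$1$2 * snd p) + A$1$2 * (B$2$1 * fst p + B$2$2 * snd p)) mod int n,
     (A$2$1 * (B$1$1 * fst p + B$1$2 * snd p) + A$2$2 * (B$2$1 * fst p + B$2$2 * snd p)) mod int n)"
    by (simp only: lat_act_def fst_conv snd_conv linear_combination_mod)
  then show ?thesis
    by (simp add: lat_act_def matrix_matrix_mult_def sum_2 algebra_simps)
qed

lemma lat_act_in_lattice: "n > 0 \<Longrightarrow> lat_act A n p \<in> lattice n"
  by (simp add: lat_act_def lattice_def)

lemma lat_act_mat:
  assumes "[s = 1] (mod int n)" and "p \<in> lattice n"
  shows "lat_act (mat s) n p = p"
proof -
  have "(s * x) mod int n = x mod int n" for x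
    using assms(1) unfolding cong_def by (metis mod_mult_left_eq mult_1)
  then show ?thesis
    using assms(2) by (cases p) (simp add: lat_act_def lattice_def mat_def)
qed

lemma same_local_stats_if_intertwined:
  assumes n: "n > 0" and intertwine: "T ** M = M' ** T"
    and inverse: "T' ** T = mat s" "T ** T' = mat s" and s: "coprime s (int n)"
  shows "same_local_stats M M' n"
proof -
  obtain u where u: "[u * s = 1] (mod int n)"
    using cong_solve_coprime_int[OF s] by (auto simp: mult.commute)
  define f where "f = lat_act T n"
  define g where "g = lat_act (mat u ** T') n"
  have gf: "g (f x) = x" if "x \<in> lattice n" for x
  proof -
    have "g (f x) = lat_act (mat u ** T' ** T) n x"
      by (simp only: f_def g_def lat_act_mult)
    also have "\<dots> = lat_act (mat u ** (T' ** T)) n x"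
      by (simp only: matrix_mul_assoc)
    also have "\<dots> = x"
      by (simp add: inverse mat_mult_mat lat_act_mat[OF u that])
    finally show ?thesis .
  qed
  have fg: "f (g y) = y" if "y \<in> lattice n" for y
  proof -
    have "f (g y) = lat_act (T ** (mat u ** T')) n y"
      by (simp only: f_def g_def lat_act_mult)
    also have "\<dots> = lat_act (mat u ** (T ** T')) n y"
      by (metis matrix_mul_assoc mat_mult_commute)
    also have "\<dots> = y"
      by (simp add: inverse mat_mult_mat lat_act_mat[OF u that])
    finally show ?thesis .
  qed
  have f_lattice: "f x \<in> lattice n" and g_lattice: "g x \<in> lattice n" for x
    using lat_act_in_lattice[OF n] by (simp_all add: f_def g_def)
  have bij: "bij_betw f (lattice n) (lattice n)"
    by (rule bij_betw_byWitness[where f' = g]) (use gf fg f_lattice g_lattice in auto)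
  have equivariant: "f (lat_act M n x) = lat_act M' n (f x)" for x
    by (simp add: f_def lat_act_mult[symmetric] intertwine)
  have "lat_edge M n x y \<longleftrightarrow> lat_edge M' n (f x) (f y)"
    if "x \<in> lattice n" "y \<in> lattice n" for x y
  proof -
    have "y = lat_act M n x \<longleftrightarrow> f y = f (lat_act M n x)"
      using gf that lat_act_in_lattice[OF n] by metis
    then show ?thesis
      using that f_lattice by (simp add: lat_edge_def equivariant)
  qed
  then show ?thesis
    unfolding same_local_stats_def using bij by blast
qed

lemma prime_not_dvd_binary_form:
  fixes a b c x y p :: int
  assumes p: "prime p" and primitive: "\<not> (p dvd a \<and> p dvd b \<and> p dvd c)"
    and y: "p dvd y \<longleftrightarrow> \<not> p dvd a" and x: "p dvd x \<longleftrightarrow> p dvd a \<and> \<not> p dvd c"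
  shows "\<not> p dvd a * x\<^sup>2 + b * x * y + c * y\<^sup>2" (is "\<not> p dvd ?Q")
proof
  assume Q: "p dvd ?Q"
  have not_dvd_mult: "\<not> p dvd u * v" if "\<not> p dvd u" "\<not> p dvd v" for u v
    using that prime_dvd_mult_iff[OF p] by blast
  have not_dvd_square: "\<not> p dvd u\<^sup>2" if "\<not> p dvd u" for u
    using that prime_dvd_power[OF p] by blast
  consider "\<not> p dvd a" | "p dvd a" "\<not> p dvd c" | "p dvd a" "p dvd c" "\<not> p dvd b"
    using primitive by blast
  then show False
  proof cases
    case 1
    have "a * x\<^sup>2 = ?Q - y * (b * x + c * y)"
      by (simp add: algebra_simps power2_eq_square)
    moreover have "p dvd y * (b * x + c * y)" using 1 y by simp
    ultimately have "p dvd a * x\<^sup>2" using Q by (metis dvd_diff)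
    then show False using 1 x not_dvd_mult not_dvd_square by blast
  next
    case 2
    have "c * y\<^sup>2 = ?Q - x * (a * x + b * y)"
      by (simp add: algebra_simps power2_eq_square)
    moreover have "p dvd x * (a * x + b * y)" using 2 x by simp
    ultimately have "p dvd c * y\<^sup>2" using Q by (metis dvd_diff)
    then show False using 2 y not_dvd_mult not_dvd_square by blast
  next
    case 3
    have "b * x * y = ?Q - (a * x\<^sup>2 + c * y\<^sup>2)"
      by (simp add: algebra_simps)
    moreover have "p dvd a * x\<^sup>2 + c * y\<^sup>2" using 3 by simp
    ultimately have "p dvd b * x * y" using Q by (metis dvd_diff)
    then show False using 3 x y not_dvd_mult by blast
  qed
qed

lemma prime_dvd_prod_primes_iff:
  fixes p :: "'a::factorial_semiring"
  assumes "finite S" "\<And>q. q \<in> S \<Longrightarrow> prime q" "prime p"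
  shows "p dvd \<Prod>S \<longleftrightarrow> p \<in> S"
proof
  assume "p dvd \<Prod>S"
  then obtain q where "q \<in> S" "p dvd q"
    using prime_dvd_prod_iff[OF assms(1,3), of "\<lambda>q. q"] by blast
  then show "p \<in> S" using assms(2,3) primes_dvd_imp_eq by metis
next
  assume "p \<in> S"
  then show "p dvd \<Prod>S" using dvd_prodI[OF assms(1), of p "\<lambda>q. q"] by simp
qed

lemma coprime_if_no_common_prime_divisor:
  fixes a n :: int
  assumes "n \<noteq> 0" and "\<And>p. prime p \<Longrightarrow> p dvd n \<Longrightarrow> \<not> p dvd a"
  shows "coprime a n"
proof (rule ccontr)
  assume "\<not> coprime a n"
  then obtain c where c: "c dvd a" "c dvd n" "\<not> is_unit c" by (rule not_coprimeE)
  with assms(1) have "c \<noteq> 0" by auto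
  with c obtain p where "prime p" "p dvd c" using prime_divisor_exists by blast
  with c assms show False using dvd_trans by blast
qed

lemma primitive_binary_form_represents_coprime:
  fixes a b c n :: int
  assumes n: "n \<noteq> 0" and primitive: "gcd (gcd a b) c = 1"
  obtains x y where "coprime (a * x\<^sup>2 + b * x * y + c * y\<^sup>2) n"
proof -
  \<comment> \<open>At each prime \<open>p\<close> dividing \<open>n\<close>, exactly one of the three terms survives modulo \<open>p\<close>.\<close>
  define X where "X = \<Prod>{p \<in> prime_factors n. p dvd a \<and> \<not> p dvd c}"
  define Y where "Y = \<Prod>{p \<in> prime_factors n. \<not> p dvd a}"
  have "\<not> p dvd a * X\<^sup>2 + b * X * Y + c * Y\<^sup>2" if p: "prime p" "p dvd n" for p
  proof (rule prime_not_dvd_binary_form[OF \<open>prime p\<close>])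
    show "\<not> (p dvd a \<and> p dvd b \<and> p dvd c)"
      using primitive p(1) by (metis gcd_greatest not_prime_unit is_unit_gcd_iff)
    have "p \<in> prime_factors n" using p n by (simp add: in_prime_factors_iff)
    moreover have "p dvd \<Prod>{q \<in> prime_factors n. R q} \<longleftrightarrow> p \<in> prime_factors n \<and> R p" for R
      using p(1) by (subst prime_dvd_prod_primes_iff) (auto dest: in_prime_factors_imp_prime)
    ultimately show "p dvd Y \<longleftrightarrow> \<not> p dvd a" "p dvd X \<longleftrightarrow> p dvd a \<and> \<not> p dvd c"
      unfolding X_def Y_def by simp_all
  qed
  then show ?thesis
    using that coprime_if_no_common_prime_divisor[OF n] by blast
qed

definition companion_matrix :: "'a::comm_ring_1 \<Rightarrow> 'a \<Rightarrow> 'a^2^2" where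
  "companion_matrix t d = vector [vector [0, - d], vector [1, t]]"

definition cyclic_matrix :: "'a::semiring_1^2^2 \<Rightarrow> 'a^2 \<Rightarrow> 'a^2^2" where
  "cyclic_matrix M v = (\<chi> i j. if j = 1 then v $ i else (M *v v) $ i)"

definition adjugate2 :: "'a::comm_ring_1^2^2 \<Rightarrow> 'a^2^2" where
  "adjugate2 A = vector [vector [A$2$2, - A$1$2], vector [- A$2$1, A$1$1]]"

lemma matrix_mult_adjugate2: "A ** adjugate2 A = mat (det A)"
  by (simp add: vec_eq_iff forall_2 matrix_matrix_mult_def sum_2 adjugate2_def mat_def det_2
      algebra_simps)

lemma adjugate2_mult_matrix: "adjugate2 A ** A = mat (det A)"
  by (simp add: vec_eq_iff forall_2 matrix_matrix_mult_def sum_2 adjugate2_def mat_def det_2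
      algebra_simps)

lemma matrix_mult_cyclic_matrix:
  "M ** cyclic_matrix M v = cyclic_matrix M v ** companion_matrix (trace M) (det M)"
  by (simp add: vec_eq_iff forall_2 matrix_matrix_mult_def matrix_vector_mult_def sum_2
      cyclic_matrix_def companion_matrix_def trace_def det_2 algebra_simps)

lemma adjugate2_cyclic_matrix_mult:
  "adjugate2 (cyclic_matrix M v) ** M = companion_matrix (trace M) (det M) ** adjugate2 (cyclic_matrix M v)"
  by (simp add: vec_eq_iff forall_2 matrix_matrix_mult_def matrix_vector_mult_def sum_2
      cyclic_matrix_def companion_matrix_def adjugate2_def trace_def det_2 algebra_simps)

lemma det_cyclic_matrix:
  "det (cyclic_matrix M v) =
    M$2$1 * (v$1)\<^sup>2 + (M$2$2 - M$1$1) * v$1 * v$2 - M$1$2 * (v$2)\<^sup>2"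
  by (simp add: det_2 cyclic_matrix_def matrix_vector_mult_def sum_2 power2_eq_square
      algebra_simps)

lemma conjugate_to_companion_mod:
  fixes M :: "int^2^2" and n :: int
  assumes "mgcd M = 1" and "n \<noteq> 0"
  obtains P where "M ** P = P ** companion_matrix (trace M) (det M)"
    and "adjugate2 P ** M = companion_matrix (trace M) (det M) ** adjugate2 P"
    and "coprime (det P) n"
proof -
  have "gcd (gcd (M$2$1) (M$2$2 - M$1$1)) (- M$1$2) = 1"
    using assms(1) by (simp add: mgcd_def ac_simps)
  then obtain x y where
    "coprime (M$2$1 * x\<^sup>2 + (M$2$2 - M$1$1) * x * y + - M$1$2 * y\<^sup>2) n"
    by (rule primitive_binary_form_represents_coprime[OF assms(2)])
  then have "coprime (det (cyclic_matrix M (vector [x, y]))) n"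
    by (simp add: det_cyclic_matrix)
  then show ?thesis
    using that matrix_mult_cyclic_matrix adjugate2_cyclic_matrix_mult by blast
qed

lemma same_local_stats_if_common_conjugate:
  fixes M M' C P P' :: "int^2^2"
  assumes n: "n > 0"
    and P: "adjugate2 P ** M = C ** adjugate2 P" and P': "M' ** P' = P' ** C"
    and "coprime (det P) (int n)" and "coprime (det P') (int n)"
  shows "same_local_stats M M' n"
proof (rule same_local_stats_if_intertwined[OF n])
  have "P' ** adjugate2 P ** M = P' ** C ** adjugate2 P"
    by (simp add: matrix_mul_assoc[symmetric] P)
  also have "\<dots> = M' ** (P' ** adjugate2 P)"
    by (simp add: matrix_mul_assoc P'[symmetric])
  finally show "P' ** adjugate2 P ** M = M' ** (P' ** adjugate2 P)" .
  show "P ** adjugate2 P' ** (P' ** adjugate2 P) = mat (det P' * det P)"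
    using matrix_mul_inner_mat[OF adjugate2_mult_matrix[of P'], of P "adjugate2 P"]
    by (simp add: matrix_mult_adjugate2 mat_mult_mat)
  show "P' ** adjugate2 P ** (P ** adjugate2 P') = mat (det P' * det P)"
    using matrix_mul_inner_mat[OF adjugate2_mult_matrix[of P], of P' "adjugate2 P'"]
    by (simp add: matrix_mult_adjugate2 mat_mult_mat mult.commute)
  show "coprime (det P' * det P) (int n)"
    using assms(4,5) by simp
qed

theorem corollary35:
  fixes M M' :: "int^2^2"
  assumes "trace M = trace M'" and "det M = det M'"
    and "mgcd M' = 1" and "mgcd M = 1"
  shows "\<forall>n::nat. n > 0 \<longrightarrow> same_local_stats M M' n"
proof (intro allI impI)
  fix n :: nat
  assume n: "n > 0"
  define C where "C = companion_matrix (trace M) (det M)"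
  obtain P where "adjugate2 P ** M = C ** adjugate2 P" and "coprime (det P) (int n)"
    using conjugate_to_companion_mod[OF assms(4), of "int n"] n unfolding C_def by auto
  moreover obtain P' where "M' ** P' = P' ** C" and "coprime (det P') (int n)"
    using conjugate_to_companion_mod[OF assms(3), of "int n"] n assms(1,2)
    unfolding C_def by auto
  ultimately show "same_local_stats M M' n"
    using same_local_stats_if_common_conjugate[OF n] by blast
qed

end
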